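(* Consider the closed-loop system described in the context, with the leader robot's stiffness $K_1$ symmetric positive definite and the follower's stiffness $K_2=0$. Fix a desired load configuration $(\bar p_L,\bar R_L)\in\mathbb{R}^3\times SO(3)$ and an internal-force value $t\in\mathbb{R}$, and apply the constant forcing input $w=\hat w(\bar p_L,\bar R_L,t)$ computed with the nominal parameters as in the context. Then a configuration $(p_{R_1},p_{R_2},p_L,R_L)$ is an equilibrium configuration of the closed-loop system (i.e. the state with this configuration and all velocities equal to zero has zero accelerations) if and only if all of the following hold: (i) $p_{R_1}=\hat{\bar p}_{R_1}-K_1^{-1}\Delta_m g\,e_3=:p_{R_1}^{eq}$; (ii) $R_L=:R_L^{eq}$ satisfies $[e_1]_\times (R_L^{eq})^\top\Big[\big(b_1 m_L-\tfrac{\hat b_1\hat m_L L}{\hat L}\big)g\,e_3+L\,t\,\bar R_L e_1\Big]=0$; (iii) $f_1=m_L g e_3-\frac{\hat m_L\hat b_1 g}{\hat L}e_3+t\,\bar R_L e_1=:f_1^{eq}$; (iv) $f_2=\frac{\hat b_1\hat m_L g}{\hat L}e_3-t\,\bar R_L e_1=:f_2^{eq}$; (v) $p_L=p_{R_1}^{eq}-R_L^{eq}\,{}^L b_1-\Big(\frac{\|f_1^{eq}\|}{k_1}+l_{01}\Big)\frac{f_1^{eq}}{\|f_1^{eq}\|}$.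
   Context: System: a rigid beam-like load of mass $m_L>0$ and positive-definite inertia $J_L$, with body frame at its center of mass (CoM), position $p_L\in\mathbb{R}^3$, orientation $R_L\in SO(3)$, body angular velocity $\omega$. Gravity $g>0$ acts along $-e_3$, where $e_i$ is the $i$-th canonical basis vector of $\mathbb{R}^3$; $[x]_\times$ denotes the matrix with $[x]_\times y=x\times y$. Two cables are attached at points whose body-frame positions are ${}^L b_1=[b_1,0,0]^\top$ and ${}^L b_2=[-b_2,0,0]^\top$, $b_1,b_2>0$, $L=b_1+b_2$; their world positions are $p_{A_i}=p_L+R_L{}^Lb_i$. Cable $i$ connects $A_i$ to the CoM $p_{R_i}$ of aerial robot $i$; with $l_i=p_{R_i}-p_{A_i}$, the force on the load is $f_i=\|f_i\|\,l_i/\|l_i\|$ with $\|f_i\|=k_i(\|l_i\|-l_{0i})$ if $\|l_i\|>l_{0i}$ and $0$ otherwise ($k_i>0$ stiffness, $l_{0i}$ rest length); the robot receives $-f_i$. Load dynamics: $m_L\ddot p_L=-m_Lg e_3+f_1+f_2$, $J_L\dot\omega=-\omega\times J_L\omega+{}^Lb_1\times R_L^\top f_1+{}^Lb_2\times R_L^\top f_2$. Robots: $\ddot p_{R_i}=u_i$ with admittance control $u_i=M_i^{-1}(-D_i\dot p_{R_i}-K_ip_{R_i}-f_i+w_i)$, $M_i,D_i$ symmetric positive definite, $w_i\in\mathbb{R}^3$ constant forcing inputs; robot 1 is the leader ($K_1$ symmetric positive definite), robot 2 the follower ($K_2=0$). Nominal parameters available to the controller: $\hat m_L,\hat b_1,\hat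 L,\hat k_1,\hat l_{01}$ (with $\hat b_2=\hat L-\hat b_1$); $\Delta_m=m_L-\hat m_L$. Nominal forcing input: $\hat{\bar f}_1=\frac{\hat b_2\hat m_L g}{\hat L}e_3+t\bar R_Le_1$, $\hat{\bar f}_2=\frac{\hat b_1\hat m_L g}{\hat L}e_3-t\bar R_Le_1$, $\hat{\bar p}_{R_1}=\bar p_L+\bar R_L[\hat b_1,0,0]^\top+\big(\frac{\|\hat{\bar f}_1\|}{\hat k_1}+\hat l_{01}\big)\frac{\hat{\bar f}_1}{\|\hat{\bar f}_1\|}$, and $\hat w_1=K_1\hat{\bar p}_{R_1}+\hat{\bar f}_1$, $\hat w_2=\hat{\bar f}_2$. *)

theory Defs
  imports "HOL-Analysis.Analysis"
begin

definition e1 :: "real^3" where "e1 = vector [1, 0, 0]"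
definition e3 :: "real^3" where "e3 = vector [0, 0, 1]"

definition spd :: "real^3^3 \<Rightarrow> bool" where
  "spd A \<longleftrightarrow> transpose A = A \<and> (\<forall>x. x \<noteq> 0 \<longrightarrow> x \<bullet> (A *v x) > 0)"

definition cable_force :: "real \<Rightarrow> real \<Rightarrow> real^3 \<Rightarrow> real^3 \<Rightarrow> real^3" where
  "cable_force k l0 pR pA =
     (let l = pR - pA in
      if norm l > l0 then (k * (norm l - l0)) *\<^sub>R ((1 / norm l) *\<^sub>R l) else 0)"

definition attach1 :: "real \<Rightarrow> real^3" where "attach1 b1 = vector [b1, 0, 0]"
definition attach2 :: "real \<Rightarrow> real^3" where "attach2 b2 = vector [- b2, 0, 0]"

definition closed_loop_acc ::
  "real \<Rightarrow> real^3^3 \<Rightarrow> real \<Rightarrow> real \<Rightarrow> real \<Rightarrow> real \<Rightarrow> real \<Rightarrow> real \<Rightarrow> real \<Rightarrow>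
   real^3^3 \<Rightarrow> real^3^3 \<Rightarrow> real^3^3 \<Rightarrow> real^3^3 \<Rightarrow> real^3^3 \<Rightarrow> real^3^3 \<Rightarrow> real^3 \<Rightarrow> real^3 \<Rightarrow>
   real^3 \<Rightarrow> real^3 \<Rightarrow> real^3 \<Rightarrow> real^3^3 \<Rightarrow> real^3 \<Rightarrow> real^3 \<Rightarrow> real^3 \<Rightarrow> real^3 \<Rightarrow>
   (real^3) \<times> (real^3) \<times> (real^3) \<times> (real^3)" where
  "closed_loop_acc mL JL g b1 b2 k1 l01 k2 l02 M1 D1 K1 M2 D2 K2 w1 w2
      pR1 pR2 pL RL vR1 vR2 vL om =
    (let pA1 = pL + RL *v attach1 b1;
         pA2 = pL + RL *v attach2 b2;
         f1 = cable_force k1 l01 pR1 pA1;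
         f2 = cable_force k2 l02 pR2 pA2
     in (matrix_inv M1 *v (- (D1 *v vR1) - K1 *v pR1 - f1 + w1),
         matrix_inv M2 *v (- (D2 *v vR2) - K2 *v pR2 - f2 + w2),
         (1 / mL) *\<^sub>R (- (mL * g) *\<^sub>R e3 + f1 + f2),
         matrix_inv JL *v (- cross3 om (JL *v om)
                           + cross3 (attach1 b1) (transpose RL *v f1)
                           + cross3 (attach2 b2) (transpose RL *v f2))))"

definition is_equilibrium ::
  "real \<Rightarrow> real^3^3 \<Rightarrow> real \<Rightarrow> real \<Rightarrow> real \<Rightarrow> real \<Rightarrow> real \<Rightarrow> real \<Rightarrow> real \<Rightarrow>
   real^3^3 \<Rightarrow> real^3^3 \<Rightarrow> real^3^3 \<Rightarrow> real^3^3 \<Rightarrow> real^3^3 \<Rightarrow> real^3^3 \<Rightarrow> real^3 \<Rightarrow> real^3 \<Rightarrow>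
   real^3 \<Rightarrow> real^3 \<Rightarrow> real^3 \<Rightarrow> real^3^3 \<Rightarrow> bool" where
  "is_equilibrium mL JL g b1 b2 k1 l01 k2 l02 M1 D1 K1 M2 D2 K2 w1 w2 pR1 pR2 pL RL \<longleftrightarrow>
     closed_loop_acc mL JL g b1 b2 k1 l01 k2 l02 M1 D1 K1 M2 D2 K2 w1 w2
       pR1 pR2 pL RL 0 0 0 0 = (0, 0, 0, 0)"

text \<open>Nominal forcing input (hatted quantities), b2hat = Lhat - b1hat.\<close>
definition fbar1_hat :: "real \<Rightarrow> real \<Rightarrow> real \<Rightarrow> real \<Rightarrow> real^3^3 \<Rightarrow> real \<Rightarrow> real^3" where
  "fbar1_hat mLh b1h Lh g RLbar t =
     (((Lh - b1h) * mLh * g) / Lh) *\<^sub>R e3 + t *\<^sub>R (RLbar *v e1)"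

definition fbar2_hat :: "real \<Rightarrow> real \<Rightarrow> real \<Rightarrow> real \<Rightarrow> real^3^3 \<Rightarrow> real \<Rightarrow> real^3" where
  "fbar2_hat mLh b1h Lh g RLbar t =
     ((b1h * mLh * g) / Lh) *\<^sub>R e3 - t *\<^sub>R (RLbar *v e1)"

definition pbarR1_hat ::
  "real \<Rightarrow> real \<Rightarrow> real \<Rightarrow> real \<Rightarrow> real \<Rightarrow> real \<Rightarrow> real^3 \<Rightarrow> real^3^3 \<Rightarrow> real \<Rightarrow> real^3" where
  "pbarR1_hat mLh b1h Lh k1h l01h g pLbar RLbar t =
     (let f = fbar1_hat mLh b1h Lh g RLbar t in
      pLbar + RLbar *v vector [b1h, 0, 0]
        + (norm f / k1h + l01h) *\<^sub>R ((1 / norm f) *\<^sub>R f))"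

definition w1_hat ::
  "real^3^3 \<Rightarrow> real \<Rightarrow> real \<Rightarrow> real \<Rightarrow> real \<Rightarrow> real \<Rightarrow> real \<Rightarrow> real^3 \<Rightarrow> real^3^3 \<Rightarrow> real \<Rightarrow> real^3" where
  "w1_hat K1 mLh b1h Lh k1h l01h g pLbar RLbar t =
     K1 *v pbarR1_hat mLh b1h Lh k1h l01h g pLbar RLbar t + fbar1_hat mLh b1h Lh g RLbar t"

definition w2_hat :: "real \<Rightarrow> real \<Rightarrow> real \<Rightarrow> real \<Rightarrow> real^3^3 \<Rightarrow> real \<Rightarrow> real^3" where
  "w2_hat mLh b1h Lh g RLbar t = fbar2_hat mLh b1h Lh g RLbar t"

end

theory Submission
  imports Defs
begin

text \<open>At rest every acceleration vanishes iff the admittance laws of both robots and the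
  force and torque balances of the load hold. The follower has no stiffness, so its cable
  transmits exactly its forcing input; the force balance then fixes the leader's cable force,
  and the leader's admittance law pins its position, the nominal mass error being absorbed by
  the stiffness. Since both anchors lie on the body x-axis the torque balance collapses to one
  cross product with e1, and a nonzero cable force determines its anchor point, hence the
  load position.\<close>

lemma invertible_matrix_inv:
  fixes A :: "'a::semiring_1^'n^'n"
  assumes "invertible A"
  shows "A ** matrix_inv A = mat 1" and "matrix_inv A ** A = mat 1"
  using someI_ex[OF assms[unfolded invertible_def]] unfolding matrix_inv_def by auto

lemma matrix_vector_mul_matrix_inv:
  fixes A :: "'a::comm_semiring_1^'n^'n"
  assumes "invertible A"
  shows "A *v (matrix_inv A *v y) = y" and "matrix_inv A *v (A *v y) = y"
  by (simp_all add: matrix_vector_mul_assoc invertible_matrix_inv[OF assms])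

lemma invertible_matrix_vector_mul_cancel:
  fixes A :: "'a::comm_semiring_1^'n^'n"
  assumes "invertible A"
  shows "A *v x = A *v y \<longleftrightarrow> x = y"
  by (metis matrix_vector_mul_matrix_inv(2)[OF assms])

lemma matrix_inv_vector_mul_eq_0_iff:
  fixes A :: "'a::comm_semiring_1^'n^'n"
  assumes "invertible A"
  shows "matrix_inv A *v x = 0 \<longleftrightarrow> x = 0"
  by (metis matrix_vector_mul_matrix_inv(1)[OF assms] matrix_vector_mult_0_right)

lemma spd_invertible: "spd A \<Longrightarrow> invertible A"
  unfolding spd_def invertible_left_inverse matrix_left_invertible_ker
  by (metis inner_zero_right less_irrefl)

lemma cross3_attach1_attach2:
  "cross3 (attach1 b1) u + cross3 (attach2 b2) v = cross3 e1 (b1 *\<^sub>R u - b2 *\<^sub>R v)"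
proof -
  have "attach1 b1 = b1 *\<^sub>R e1" "attach2 b2 = - (b2 *\<^sub>R e1)"
    unfolding attach1_def attach2_def e1_def by (simp_all add: vec_eq_iff vector_def forall_3)
  then show ?thesis by (simp add: cross_mult_left cross_mult_right Cross3.right_diff_distrib)
qed

lemma cable_force_eq_imp_anchor_eq:
  assumes "cable_force k l0 pR pA = f" and "f \<noteq> 0" and "k > 0"
  shows "pA = pR - (norm f / k + l0) *\<^sub>R ((1 / norm f) *\<^sub>R f)"
proof -
  define l where "l = pR - pA"
  have taut: "norm l > l0" and f_l: "f = (k * (norm l - l0) / norm l) *\<^sub>R l"
    using assms unfolding cable_force_def l_def[symmetric] Let_def by (auto split: if_splits)
  have "l \<noteq> 0" using f_l \<open>f \<noteq> 0\<close> by auto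
  have "norm f = k * (norm l - l0)"
    using f_l taut \<open>l \<noteq> 0\<close> \<open>k > 0\<close> by simp
  then have "(norm f / k + l0) *\<^sub>R ((1 / norm f) *\<^sub>R f) = l"
    using f_l taut \<open>l \<noteq> 0\<close> \<open>k > 0\<close> by (simp add: field_simps)
  then show ?thesis unfolding l_def by simp
qed

lemma is_equilibrium_iff_balance:
  assumes "mL \<noteq> 0" and "invertible M1" and "invertible M2" and "invertible JL"
  shows "is_equilibrium mL JL g b1 b2 k1 l01 k2 l02 M1 D1 K1 M2 D2 K2 w1 w2 pR1 pR2 pL RL \<longleftrightarrow>
    (let f1 = cable_force k1 l01 pR1 (pL + RL *v attach1 b1);
         f2 = cable_force k2 l02 pR2 (pL + RL *v attach2 b2)
     in K1 *v pR1 + f1 = w1 \<and> K2 *v pR2 + f2 = w2 \<and> f1 + f2 = (mL * g) *\<^sub>R e3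
      \<and> cross3 e1 (transpose RL *v (b1 *\<^sub>R f1 - b2 *\<^sub>R f2)) = 0)"
proof -
  have "(1 / mL) *\<^sub>R (- (mL * g) *\<^sub>R e3 + f1 + f2) = 0 \<longleftrightarrow> f1 + f2 = (mL * g) *\<^sub>R e3"
    for f1 f2 :: "real^3"
    using assms(1) by (simp only: scaleR_eq_0_iff add.assoc add_eq_0_iff minus_minus) simp
  moreover have "- a - f + w = 0 \<longleftrightarrow> a + f = w" for a f w :: "real^3"
  proof -
    have "- a - f + w = w - (a + f)" by (simp add: algebra_simps)
    then show ?thesis by (metis right_minus_eq)
  qed
  ultimately show ?thesis
    unfolding is_equilibrium_def closed_loop_acc_def Let_def
    using assms
    by (simp add: matrix_inv_vector_mul_eq_0_iff cross3_attach1_attach2 matrix_vector_mult_diff_distrib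
        matrix_vector_mult_scaleR)
qed

lemma is_equilibrium_leader_follower_iff:
  fixes f1eq f2eq pR1eq :: "real^3"
  assumes "mL \<noteq> 0" and "invertible M1" and "invertible M2" and "invertible JL"
    and "invertible K1" and weight: "f1eq + f2eq = (mL * g) *\<^sub>R e3"
    and "f1eq \<noteq> 0" and "k1 > 0"
  shows "is_equilibrium mL JL g b1 b2 k1 l01 k2 l02 M1 D1 K1 M2 D2 0
      (K1 *v pR1eq + f1eq) f2eq pR1 pR2 pL RL \<longleftrightarrow>
    pR1 = pR1eq \<and> cross3 e1 (transpose RL *v (b1 *\<^sub>R f1eq - b2 *\<^sub>R f2eq)) = 0
    \<and> cable_force k1 l01 pR1 (pL + RL *v attach1 b1) = f1eq
    \<and> cable_force k2 l02 pR2 (pL + RL *v attach2 b2) = f2eq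
    \<and> pL = pR1eq - RL *v attach1 b1 - (norm f1eq / k1 + l01) *\<^sub>R ((1 / norm f1eq) *\<^sub>R f1eq)"
proof -
  define f1 where "f1 = cable_force k1 l01 pR1 (pL + RL *v attach1 b1)"
  define f2 where "f2 = cable_force k2 l02 pR2 (pL + RL *v attach2 b2)"
  have anchor: "pL = pR1eq - RL *v attach1 b1 - (norm f1eq / k1 + l01) *\<^sub>R ((1 / norm f1eq) *\<^sub>R f1eq)"
    if "f1 = f1eq" and "pR1 = pR1eq"
  proof -
    have "pL + RL *v attach1 b1 = pR1 - (norm f1eq / k1 + l01) *\<^sub>R ((1 / norm f1eq) *\<^sub>R f1eq)"
      using cable_force_eq_imp_anchor_eq that(1) assms(7,8) unfolding f1_def by blast
    then show ?thesis using that(2) by (simp add: algebra_simps)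
  qed
  have "is_equilibrium mL JL g b1 b2 k1 l01 k2 l02 M1 D1 K1 M2 D2 0
      (K1 *v pR1eq + f1eq) f2eq pR1 pR2 pL RL \<longleftrightarrow>
    K1 *v pR1 + f1 = K1 *v pR1eq + f1eq \<and> f2 = f2eq \<and> f1 + f2 = f1eq + f2eq
      \<and> cross3 e1 (transpose RL *v (b1 *\<^sub>R f1 - b2 *\<^sub>R f2)) = 0"
    unfolding is_equilibrium_iff_balance[OF assms(1-4)] weight[symmetric] Let_def
      f1_def[symmetric] f2_def[symmetric] by simp
  also have "\<dots> \<longleftrightarrow> pR1 = pR1eq \<and> f1 = f1eq \<and> f2 = f2eq
      \<and> cross3 e1 (transpose RL *v (b1 *\<^sub>R f1eq - b2 *\<^sub>R f2eq)) = 0"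
    using invertible_matrix_vector_mul_cancel[OF assms(5)] by auto
  finally show ?thesis
    using anchor unfolding f1_def[symmetric] f2_def[symmetric] by blast
qed

lemma w1_hat_eq:
  assumes "Lh \<noteq> 0" and "invertible K1"
  shows "w1_hat K1 mLh b1h Lh k1h l01h g pLbar RLbar t =
    K1 *v (pbarR1_hat mLh b1h Lh k1h l01h g pLbar RLbar t - matrix_inv K1 *v (((mL - mLh) * g) *\<^sub>R e3))
    + ((mL * g) *\<^sub>R e3 - (mLh * b1h * g / Lh) *\<^sub>R e3 + t *\<^sub>R (RLbar *v e1))"
proof -
  have coeff: "(Lh - b1h) * mLh * g / Lh = mL * g - mLh * b1h * g / Lh - (mL - mLh) * g"
    using assms(1) by (simp add: field_simps)
  show ?thesis
    unfolding w1_hat_def fbar1_hat_def coeff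
    by (simp add: matrix_vector_mult_diff_distrib matrix_vector_mul_matrix_inv(1)[OF assms(2)]
        algebra_simps)
qed

theorem theorem2:
  fixes mL g b1 b2 k1 l01 k2 l02 mLh b1h Lh k1h l01h t :: real
    and JL M1 D1 K1 M2 D2 K2 RLbar RL :: "real^3^3"
    and pLbar pR1 pR2 pL :: "real^3"
  assumes mL: "mL > 0" and g: "g > 0" and b1: "b1 > 0" and b2: "b2 > 0"
    and JL: "spd JL" and M1: "spd M1" and D1: "spd D1" and M2: "spd M2" and D2: "spd D2"
    and K1: "spd K1" and K2: "K2 = 0"
    and k1: "k1 > 0" and k2: "k2 > 0" and l01: "l01 \<ge> 0" and l02: "l02 \<ge> 0"
    and mLh: "mLh > 0" and b1h: "b1h > 0" and Lh: "Lh > b1h" and k1h: "k1h > 0" and l01h: "l01h \<ge> 0"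
    and RLbar: "rotation_matrix RLbar" and RL: "rotation_matrix RL"
    and f1eq_nz: "(mL * g) *\<^sub>R e3 - (mLh * b1h * g / Lh) *\<^sub>R e3 + t *\<^sub>R (RLbar *v e1) \<noteq> 0"
  shows
    "is_equilibrium mL JL g b1 b2 k1 l01 k2 l02 M1 D1 K1 M2 D2 K2
        (w1_hat K1 mLh b1h Lh k1h l01h g pLbar RLbar t) (w2_hat mLh b1h Lh g RLbar t)
        pR1 pR2 pL RL
     \<longleftrightarrow>
     (let L = b1 + b2;
          pR1eq = pbarR1_hat mLh b1h Lh k1h l01h g pLbar RLbar t
                  - matrix_inv K1 *v (((mL - mLh) * g) *\<^sub>R e3);
          f1eq = (mL * g) *\<^sub>R e3 - (mLh * b1h * g / Lh) *\<^sub>R e3 + t *\<^sub>R (RLbar *v e1);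
          f2eq = (b1h * mLh * g / Lh) *\<^sub>R e3 - t *\<^sub>R (RLbar *v e1)
      in pR1 = pR1eq
       \<and> cross3 e1 (transpose RL *v
            (((b1 * mL - b1h * mLh * L / Lh) * g) *\<^sub>R e3 + (L * t) *\<^sub>R (RLbar *v e1))) = 0
       \<and> cable_force k1 l01 pR1 (pL + RL *v attach1 b1) = f1eq
       \<and> cable_force k2 l02 pR2 (pL + RL *v attach2 b2) = f2eq
       \<and> pL = pR1eq - RL *v attach1 b1 - (norm f1eq / k1 + l01) *\<^sub>R ((1 / norm f1eq) *\<^sub>R f1eq))"
proof -
  define pR1eq where "pR1eq = pbarR1_hat mLh b1h Lh k1h l01h g pLbar RLbar t
    - matrix_inv K1 *v (((mL - mLh) * g) *\<^sub>R e3)"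
  define f1eq where "f1eq = (mL * g) *\<^sub>R e3 - (mLh * b1h * g / Lh) *\<^sub>R e3 + t *\<^sub>R (RLbar *v e1)"
  define f2eq where "f2eq = (b1h * mLh * g / Lh) *\<^sub>R e3 - t *\<^sub>R (RLbar *v e1)"
  have K1_inv: "invertible K1" using K1 by (rule spd_invertible)
  have w1: "w1_hat K1 mLh b1h Lh k1h l01h g pLbar RLbar t = K1 *v pR1eq + f1eq"
    unfolding pR1eq_def f1eq_def using w1_hat_eq[OF _ K1_inv] Lh b1h by simp
  have w2: "w2_hat mLh b1h Lh g RLbar t = f2eq"
    unfolding w2_hat_def fbar2_hat_def f2eq_def ..
  have weight: "f1eq + f2eq = (mL * g) *\<^sub>R e3"
    unfolding f1eq_def f2eq_def by (simp add: algebra_simps)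
  have torque: "b1 *\<^sub>R f1eq - b2 *\<^sub>R f2eq =
    ((b1 * mL - b1h * mLh * (b1 + b2) / Lh) * g) *\<^sub>R e3 + ((b1 + b2) * t) *\<^sub>R (RLbar *v e1)"
  proof -
    have "b1 * (mL * g) - b1 * (mLh * b1h * g / Lh) - b2 * (b1h * mLh * g / Lh)
          = (b1 * mL - b1h * mLh * (b1 + b2) / Lh) * g"
      using Lh b1h by (simp add: field_simps)
    then show ?thesis unfolding f1eq_def f2eq_def
      by (simp add: algebra_simps flip: scaleR_add_left scaleR_diff_left)
  qed
  have "mL \<noteq> 0" using mL by simp
  moreover have "f1eq \<noteq> 0" using f1eq_nz unfolding f1eq_def .
  ultimately show ?thesis
    using is_equilibrium_leader_follower_iff[of mL M1 M2 JL K1 f1eq f2eq g k1]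
      spd_invertible[OF M1] spd_invertible[OF M2] spd_invertible[OF JL] K1_inv weight k1
    unfolding w1 w2 K2 torque[symmetric] Let_def
      pR1eq_def[symmetric] f1eq_def[symmetric] f2eq_def[symmetric]
    by simp
qed

end
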